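(* Let $q\ge1$ be an integer. Suppose there are constants $\varepsilon,\delta>0$ and a Borel set $K\subset[0,1)$ such that: (i) $e(q,x;\varepsilon,\delta)\le1$ for $x\in K$ and $e(q,x;\varepsilon,\delta)\le2$ for $x\in[0,1)\setminus K$; (ii) if $(\mathbf{u},\mathbf{v})\in E(q,x;\varepsilon,\delta)$ for some $x\in[0,1)\setminus K$ with $\mathbf{u}\ne\mathbf{v}$, then $x(\mathbf{u})\in K$ or $x(\mathbf{v})\in K$. Then $\sigma(q)\le(\sqrt5+1)/2$.
   Context: Standing setup: $b\ge2$ integer, $\mathcal{A}=\{0,\dots,b-1\}$, $\gamma\in(1/b,1)$, $\psi$ a $\mathbb{Z}$-periodic $C^1$ function. $S(x,\mathbf{i})=\sum_{n\ge1}\gamma^{n-1}\psi\big(\frac{x+i_1+i_2b+\cdots+i_nb^{n-1}}{b^n}\big)$, $S'=\partial_xS$. For $\mathbf{u}\in\mathcal{A}^q$, $x(\mathbf{u})=(x+u_1+u_2b+\cdots+u_qb^{q-1})/b^q$. Sequences $\mathbf{i},\mathbf{j}$ are $(\varepsilon,\delta)$-tangent at $x_0$ if $|S(x_0,\mathbf{i})-S(x_0,\mathbf{j})|\le\varepsilon$ and $|S'(x_0,\mathbf{i})-S'(x_0,\mathbf{j})|\le\delta$. $E(q,x_0;\varepsilon,\delta)$: pairs $(\mathbf{k},\mathbf{l})\in\mathcal{A}^q\times\mathcal{A}^q$ such that some concatenations $\mathbf{ku},\mathbf{lv}$ are $(\varepsilon,\delta)$-tangent at $x_0$; $e(q,x_0;\varepsilon,\delta)=\max_{\mathbf{k}}\#\{\mathbf{l}:(\mathbf{k},\mathbf{l})\in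 E(q,x_0;\varepsilon,\delta)\}$. Weight function: measurable $\omega:[0,1)\to(0,\infty)$ with $\omega,1/\omega$ bounded. Admissible testing function of order $q$: measurable $V:[0,1)\times\mathcal{A}^q\times\mathcal{A}^q\to[0,\infty)$ such that for some $\varepsilon,\delta>0$, $V(x,\mathbf{u},\mathbf{v})V(x,\mathbf{v},\mathbf{u})\ge1$ whenever $x\in[0,1)$ and $(\mathbf{u},\mathbf{v})\in E(q,x;\varepsilon,\delta)$. $\Sigma_{V,\omega}(x)=\sup_{\mathbf{u}}\frac{\omega(x)}{\omega(x(\mathbf{u}))}\sum_{\mathbf{v}}V(x,\mathbf{u},\mathbf{v})$; $\sigma(q)=\inf_{\omega,V}\|\Sigma_{V,\omega}\|_\infty$. *)

theory Defs
  imports "HOL-Analysis.Analysis" "HOL-Probability.Essential_Supremum"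
begin

text \<open>Infinite sequences over the alphabet {0,...,b-1}, indexed from 0
  (so i 0 is the paper's i_1).\<close>
definition seqs :: "nat \<Rightarrow> (nat \<Rightarrow> nat) set" where
  "seqs b = {i. \<forall>n. i n < b}"

text \<open>Finite words of length q over the alphabet, as lists (u ! 0 = u_1).\<close>
definition words :: "nat \<Rightarrow> nat \<Rightarrow> nat list set" where
  "words b q = {u. length u = q \<and> (\<forall>a\<in>set u. a < b)}"

definition concat_seq :: "nat list \<Rightarrow> (nat \<Rightarrow> nat) \<Rightarrow> (nat \<Rightarrow> nat)" where
  "concat_seq k u = (\<lambda>n. if n < length k then k ! n else u (n - length k))"

definition S :: "nat \<Rightarrow> real \<Rightarrow> (real \<Rightarrow> real) \<Rightarrow> real \<Rightarrow> (nat \<Rightarrow> nat) \<Rightarrow> real" where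
  "S b \<gamma> \<psi> x i =
     (\<Sum>n. \<gamma> ^ n * \<psi> ((x + (\<Sum>k<Suc n. real (i k) * real b ^ k)) / real b ^ Suc n))"

definition S' :: "nat \<Rightarrow> real \<Rightarrow> (real \<Rightarrow> real) \<Rightarrow> real \<Rightarrow> (nat \<Rightarrow> nat) \<Rightarrow> real" where
  "S' b \<gamma> \<psi> x i = deriv (\<lambda>y. S b \<gamma> \<psi> y i) x"

definition xw :: "nat \<Rightarrow> real \<Rightarrow> nat list \<Rightarrow> real" where
  "xw b x u = (x + (\<Sum>k<length u. real (u ! k) * real b ^ k)) / real b ^ length u"

definition tangent ::
  "nat \<Rightarrow> real \<Rightarrow> (real \<Rightarrow> real) \<Rightarrow> real \<Rightarrow> real \<Rightarrow> real \<Rightarrow> (nat \<Rightarrow> nat) \<Rightarrow> (nat \<Rightarrow> nat) \<Rightarrow> bool" where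
  "tangent b \<gamma> \<psi> \<epsilon> \<delta> x0 i j \<longleftrightarrow>
     \<bar>S b \<gamma> \<psi> x0 i - S b \<gamma> \<psi> x0 j\<bar> \<le> \<epsilon> \<and> \<bar>S' b \<gamma> \<psi> x0 i - S' b \<gamma> \<psi> x0 j\<bar> \<le> \<delta>"

definition Eset ::
  "nat \<Rightarrow> real \<Rightarrow> (real \<Rightarrow> real) \<Rightarrow> nat \<Rightarrow> real \<Rightarrow> real \<Rightarrow> real \<Rightarrow> (nat list \<times> nat list) set" where
  "Eset b \<gamma> \<psi> q x0 \<epsilon> \<delta> =
     {(k, l). k \<in> words b q \<and> l \<in> words b q \<and>
        (\<exists>u\<in>seqs b. \<exists>v\<in>seqs b. tangent b \<gamma> \<psi> \<epsilon> \<delta> x0 (concat_seq k u) (concat_seq l v))}"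

definition e_num ::
  "nat \<Rightarrow> real \<Rightarrow> (real \<Rightarrow> real) \<Rightarrow> nat \<Rightarrow> real \<Rightarrow> real \<Rightarrow> real \<Rightarrow> nat" where
  "e_num b \<gamma> \<psi> q x0 \<epsilon> \<delta> =
     Max ((\<lambda>k. card {l. (k, l) \<in> Eset b \<gamma> \<psi> q x0 \<epsilon> \<delta>}) ` words b q)"

definition weight_fun :: "(real \<Rightarrow> real) \<Rightarrow> bool" where
  "weight_fun \<omega> \<longleftrightarrow>
     \<omega> \<in> borel_measurable (restrict_space lebesgue {0..<1}) \<and>
     (\<forall>x\<in>{0..<1}. 0 < \<omega> x) \<and>
     (\<exists>C. \<forall>x\<in>{0..<1}. \<omega> x \<le> C \<and> 1 / \<omega> x \<le> C)"

definition admissible_test ::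
  "nat \<Rightarrow> real \<Rightarrow> (real \<Rightarrow> real) \<Rightarrow> nat \<Rightarrow> (real \<Rightarrow> nat list \<Rightarrow> nat list \<Rightarrow> real) \<Rightarrow> bool" where
  "admissible_test b \<gamma> \<psi> q V \<longleftrightarrow>
     (\<forall>u\<in>words b q. \<forall>v\<in>words b q.
        (\<lambda>x. V x u v) \<in> borel_measurable (restrict_space lebesgue {0..<1})) \<and>
     (\<forall>x\<in>{0..<1}. \<forall>u\<in>words b q. \<forall>v\<in>words b q. 0 \<le> V x u v) \<and>
     (\<exists>\<epsilon>>0. \<exists>\<delta>>0. \<forall>x\<in>{0..<1}. \<forall>(u, v)\<in>Eset b \<gamma> \<psi> q x \<epsilon> \<delta>.
        V x u v * V x v u \<ge> 1)"

definition Sigma_Vw ::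
  "nat \<Rightarrow> nat \<Rightarrow> (real \<Rightarrow> nat list \<Rightarrow> nat list \<Rightarrow> real) \<Rightarrow> (real \<Rightarrow> real) \<Rightarrow> real \<Rightarrow> real" where
  "Sigma_Vw b q V \<omega> x =
     Max ((\<lambda>u. \<omega> x / \<omega> (xw b x u) * (\<Sum>v\<in>words b q. V x u v)) ` words b q)"

definition sigma_q :: "nat \<Rightarrow> real \<Rightarrow> (real \<Rightarrow> real) \<Rightarrow> nat \<Rightarrow> ereal" where
  "sigma_q b \<gamma> \<psi> q =
     Inf {esssup (restrict_space lebesgue {0..<1}) (\<lambda>x. ereal (Sigma_Vw b q V \<omega> x)) | \<omega> V.
            weight_fun \<omega> \<and> admissible_test b \<gamma> \<psi> q V}"

end

theory Submission
  imports Defs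
begin

text \<open>
  Take the weight \<open>\<omega> = 1\<close> on \<open>K\<close> and \<open>\<omega> = 1/\<phi>\<close> off \<open>K\<close>, \<open>\<phi>\<close> the golden ratio, and
  the testing function \<open>V(x,u,v) = \<omega>(x(u)) / \<omega>(x(v))\<close> on \<open>E(q,x;\<epsilon>,\<delta>)\<close>, zero elsewhere.
  Since \<open>E\<close> is symmetric, \<open>V(x,u,v) V(x,v,u) = 1\<close> on \<open>E\<close>, and the row of \<open>u\<close> in
  \<open>\<Sigma>\<^sub>V\<^sub>,\<^sub>\<omega>(x)\<close> collapses to \<open>\<omega>(x) \<Sigma>\<^sub>v 1/\<omega>(x(v))\<close> over the neighbours \<open>v\<close> of \<open>u\<close>.
  With only \<open>u\<close> itself this is at most \<open>\<phi>\<close>; with a second neighbour we have \<open>x \<notin> K\<close>, and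
  by (ii) at most one summand equals \<open>\<phi>\<close>, so the row is at most \<open>(1 + \<phi>)/\<phi> = \<phi>\<close>.

  Measurability of \<open>V\<close> is the analytic part: the set of \<open>x \<in> [0,1]\<close> at which two cylinders
  contain tangent sequences is closed, because \<open>S\<close> and \<open>S'\<close> (the termwise derivative, by
  uniform convergence) are jointly continuous in \<open>(x, i)\<close> and cylinders are compact in the
  product topology.
\<close>

text \<open>\<open>prefix_point b x i n\<close> is the paper's \<open>x(i\<^sub>1 \<dots> i\<^sub>n\<^sub>+\<^sub>1)\<close>.\<close>

definition prefix_point :: "nat \<Rightarrow> real \<Rightarrow> (nat \<Rightarrow> nat) \<Rightarrow> nat \<Rightarrow> real" where
  "prefix_point b x i n = (x + (\<Sum>k<Suc n. real (i k) * real b ^ k)) / real b ^ Suc n"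

definition coding_series :: "nat \<Rightarrow> real \<Rightarrow> (real \<Rightarrow> real) \<Rightarrow> real \<Rightarrow> (nat \<Rightarrow> nat) \<Rightarrow> real" where
  "coding_series b c f x i = (\<Sum>n. c ^ n * f (prefix_point b x i n))"

lemma S_eq_coding_series: "S b \<gamma> \<psi> x i = coding_series b \<gamma> \<psi> x i"
  by (simp add: S_def coding_series_def prefix_point_def)

lemma seqs_base_pos: "i \<in> seqs b \<Longrightarrow> 0 < b"
  by (metis seqs_def mem_Collect_eq gr_zeroI less_zeroE)

lemma digit_sum_le:
  assumes "i \<in> seqs b"
  shows "(\<Sum>k<N. real (i k) * real b ^ k) \<le> real b ^ N - 1"
proof (induction N)
  case (Suc N)
  have "i N + 1 \<le> b"
    using assms by (simp add: seqs_def Suc_le_eq)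
  then have "real (i N) \<le> real b - 1"
    by linarith
  then have "real (i N) * real b ^ N \<le> (real b - 1) * real b ^ N"
    by (intro mult_right_mono) auto
  with Suc show ?case by (simp add: algebra_simps)
qed simp

text \<open>Each map \<open>x \<mapsto> x(u)\<close> sends \<open>[-1,2]\<close> into itself; this neighbourhood of \<open>[0,1]\<close>
  is where the series for \<open>S\<close> is differentiated, so that \<open>S'\<close> is also correct at \<open>x = 0\<close>.\<close>

lemma prefix_point_mem:
  assumes "i \<in> seqs b" "x \<in> {-1..2}"
  shows "prefix_point b x i n \<in> {-1..2}"
proof -
  define B where "B = real b ^ Suc n"
  define c where "c = (\<Sum>k<Suc n. real (i k) * real b ^ k)"
  have "1 \<le> B"
    unfolding B_def using seqs_base_pos[OF assms(1)] by (intro one_le_power) simp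
  moreover have "0 \<le> c"
    unfolding c_def by (intro sum_nonneg) simp
  moreover have "c \<le> B - 1"
    unfolding c_def B_def by (rule digit_sum_le[OF assms(1)])
  moreover have "prefix_point b x i n = (x + c) / B"
    by (simp add: prefix_point_def B_def c_def)
  ultimately show ?thesis
    using assms(2) by (simp add: le_divide_eq divide_le_eq)
qed

lemma continuous_on_prefix_point [continuous_intros]:
  "continuous_on A (\<lambda>p. prefix_point b (fst p) (snd p) n)"
  unfolding prefix_point_def divide_inverse
  by (intro continuous_intros continuous_on_compose2[OF continuous_on_product_coordinates]) auto

lemma coding_series_term_bound:
  assumes "continuous_on {-1..2} f" "0 \<le> c"
  obtains M where
    "\<And>n x i. x \<in> {-1..2} \<Longrightarrow> i \<in> seqs b \<Longrightarrow> norm (c ^ n * f (prefix_point b x i n)) \<le> c ^ n * M"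
proof -
  have "compact (f ` {-1..2})"
    by (intro compact_continuous_image assms) auto
  then obtain M where M: "\<forall>y\<in>f ` {-1..2}. norm y \<le> M"
    using compact_imp_bounded bounded_iff by metis
  show ?thesis
    by (rule that) (use assms(2) M prefix_point_mem in \<open>auto simp: abs_mult intro!: mult_left_mono\<close>)
qed

lemma summable_geometric_mult: "0 \<le> c \<Longrightarrow> c < 1 \<Longrightarrow> summable (\<lambda>n. c ^ n * M :: real)"
  by (intro summable_mult2 summable_geometric) auto

lemma uniform_limit_coding_series:
  assumes "continuous_on {-1..2} f" "0 \<le> c" "c < 1"
  shows "uniform_limit ({-1..2} \<times> seqs b)
           (\<lambda>n p. \<Sum>m<n. c ^ m * f (prefix_point b (fst p) (snd p) m))
           (\<lambda>p. coding_series b c f (fst p) (snd p)) sequentially"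
proof -
  obtain M where "\<And>n x i. x \<in> {-1..2} \<Longrightarrow> i \<in> seqs b \<Longrightarrow>
      norm (c ^ n * f (prefix_point b x i n)) \<le> c ^ n * M"
    using coding_series_term_bound[OF assms(1,2)] by blast
  then show ?thesis
    unfolding coding_series_def
    by (intro Weierstrass_m_test[OF _ summable_geometric_mult[OF assms(2,3), of M]]) auto
qed

lemma continuous_on_coding_series:
  assumes "continuous_on UNIV f" "0 \<le> c" "c < 1"
  shows "continuous_on ({-1..2} \<times> seqs b) (\<lambda>p. coding_series b c f (fst p) (snd p))"
  by (rule uniform_limit_theorem[OF _ uniform_limit_coding_series])
     (use assms in \<open>auto intro!: always_eventually continuous_intros
        continuous_on_compose2[OF assms(1)] continuous_on_subset[OF assms(1)]\<close>)

lemma coding_series_has_real_derivative: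
  assumes f': "\<And>y. (f has_real_derivative f' y) (at y)" "continuous_on UNIV f'"
    and c: "0 \<le> c" "c < 1" and x: "x \<in> {-1<..<2}" and i: "i \<in> seqs b"
  shows "((\<lambda>y. coding_series b c f y i) has_real_derivative
           coding_series b (c / b) (\<lambda>y. f' y / b) x i) (at x)"
proof -
  have b: "1 \<le> real b" using seqs_base_pos[OF i] by simp
  have c': "0 \<le> c / b" "c / b < 1"
    using c b by (auto simp: divide_less_eq)
  have term_deriv: "((\<lambda>y. c ^ n * f (prefix_point b y i n)) has_real_derivative
      (c / b) ^ n * (f' (prefix_point b y i n) / b)) (at y)" for n y
  proof -
    have "((\<lambda>y. prefix_point b y i n) has_real_derivative 1 / real b ^ Suc n) (at y)"
      unfolding prefix_point_def using b by (auto intro!: derivative_eq_intros)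
    from DERIV_cmult[OF DERIV_chain2[OF f'(1) this], of "c ^ n"] show ?thesis
      by (simp add: power_divide mult.commute)
  qed
  have "continuous_on {-1..2} (\<lambda>y. f' y / b)"
    using b by (intro continuous_intros continuous_on_subset[OF f'(2)]) auto
  then obtain M where M: "\<And>n x. x \<in> {-1..2} \<Longrightarrow>
      norm ((c / b) ^ n * (f' (prefix_point b x i n) / b)) \<le> (c / b) ^ n * M"
    using coding_series_term_bound[OF _ c'(1)] i by metis
  have "continuous_on {-1..2} f"
    using f'(1) by (meson DERIV_isCont continuous_at_imp_continuous_on)
  moreover have "(0::real) \<in> {-1..2}"
    by simp
  ultimately obtain N where N: "\<And>n. norm (c ^ n * f (prefix_point b 0 i n)) \<le> c ^ n * N"
    using coding_series_term_bound[OF _ c(1)] i by metis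
  show ?thesis
    unfolding coding_series_def
  proof (rule has_field_derivative_series'(2)[of "{-1<..<2}"
      "\<lambda>n y. c ^ n * f (prefix_point b y i n)"
      "\<lambda>n y. (c / b) ^ n * (f' (prefix_point b y i n) / b)" 0])
    show "uniformly_convergent_on {-1<..<2}
        (\<lambda>n y. \<Sum>m<n. (c / b) ^ m * (f' (prefix_point b y i m) / b))"
      using M by (intro Weierstrass_m_test'[OF _ summable_geometric_mult[OF c', of M]]) auto
    show "summable (\<lambda>n. c ^ n * f (prefix_point b 0 i n))"
      using N by (intro summable_comparison_test[OF _ summable_geometric_mult[OF c, of N]]) auto
  qed (use x term_deriv in \<open>auto intro: has_field_derivative_at_within\<close>)
qed

lemma S'_eq_coding_series:
  assumes "\<And>y. (\<psi> has_real_derivative D y) (at y)" "continuous_on UNIV D"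
    and "0 \<le> \<gamma>" "\<gamma> < 1" "x \<in> {-1<..<2}" "i \<in> seqs b"
  shows "S' b \<gamma> \<psi> x i = coding_series b (\<gamma> / b) (\<lambda>y. D y / b) x i"
  unfolding S'_def S_eq_coding_series
  by (rule DERIV_imp_deriv[OF coding_series_has_real_derivative[OF assms]])

lemma continuous_on_S:
  assumes "\<And>y. (\<psi> has_real_derivative D y) (at y)" "0 \<le> \<gamma>" "\<gamma> < 1"
  shows "continuous_on ({0..1} \<times> seqs b) (\<lambda>p. S b \<gamma> \<psi> (fst p) (snd p))"
proof -
  have "continuous_on UNIV \<psi>"
    using assms(1) by (meson DERIV_isCont continuous_at_imp_continuous_on)
  from continuous_on_coding_series[OF this assms(2,3)] show ?thesis
    unfolding S_eq_coding_series by (rule continuous_on_subset) auto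
qed

lemma continuous_on_S':
  assumes "\<And>y. (\<psi> has_real_derivative D y) (at y)" "continuous_on UNIV D" "0 \<le> \<gamma>" "\<gamma> < 1"
  shows "continuous_on ({0..1} \<times> seqs b) (\<lambda>p. S' b \<gamma> \<psi> (fst p) (snd p))"
proof (cases "b = 0")
  case True
  then show ?thesis by (simp add: seqs_def)
next
  case False
  have "continuous_on UNIV (\<lambda>y. D y / b)"
    using False by (intro continuous_intros assms(2)) auto
  moreover have "0 \<le> \<gamma> / b" "\<gamma> / b < 1"
    using assms(3,4) False by (auto simp: divide_less_eq)
  ultimately have "continuous_on ({0..1} \<times> seqs b)
      (\<lambda>p. coding_series b (\<gamma> / b) (\<lambda>y. D y / b) (fst p) (snd p))"
    by (intro continuous_on_subset[OF continuous_on_coding_series]) auto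
  then show ?thesis
    by (rule continuous_on_cong[THEN iffD1, rotated 2])
       (auto simp: S'_eq_coding_series[OF assms])
qed

definition cylinder :: "nat \<Rightarrow> nat list \<Rightarrow> (nat \<Rightarrow> nat) set" where
  "cylinder b w = {i \<in> seqs b. \<forall>n<length w. i n = w ! n}"

lemma compact_cylinder: "compact (cylinder b w)"
proof -
  have "cylinder b w = PiE UNIV (\<lambda>n. if n < length w then {w ! n} \<inter> {..<b} else {..<b})"
    by (auto simp: cylinder_def seqs_def PiE_iff split: if_splits) metis
  moreover have "compactin (product_topology (\<lambda>_. euclidean) UNIV)
      (PiE UNIV (\<lambda>n. if n < length w then {w ! n} \<inter> {..<b} else {..<b}))"
    unfolding compactin_PiE by (auto intro: finite_imp_compact)
  ultimately show ?thesis
    by (simp add: euclidean_product_topology)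
qed

lemma concat_seq_in_cylinder: "u \<in> words b q \<Longrightarrow> s \<in> seqs b \<Longrightarrow> concat_seq u s \<in> cylinder b u"
  by (auto simp: cylinder_def concat_seq_def words_def seqs_def)

lemma cylinder_concat_seq:
  assumes "i \<in> cylinder b u"
  shows "concat_seq u (\<lambda>n. i (n + length u)) = i" "(\<lambda>n. i (n + length u)) \<in> seqs b"
  using assms by (auto simp: cylinder_def seqs_def concat_seq_def fun_eq_iff)

definition tangency_set ::
  "nat \<Rightarrow> real \<Rightarrow> (real \<Rightarrow> real) \<Rightarrow> real \<Rightarrow> real \<Rightarrow> nat list \<Rightarrow> nat list \<Rightarrow> real set" where
  "tangency_set b \<gamma> \<psi> \<epsilon> \<delta> u v =
     {x \<in> {0..1}. \<exists>i\<in>cylinder b u. \<exists>j\<in>cylinder b v. tangent b \<gamma> \<psi> \<epsilon> \<delta> x i j}"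

lemma Eset_iff_tangency_set:
  assumes "x \<in> {0..<1}" "u \<in> words b q" "v \<in> words b q"
  shows "(u, v) \<in> Eset b \<gamma> \<psi> q x \<epsilon> \<delta> \<longleftrightarrow> x \<in> tangency_set b \<gamma> \<psi> \<epsilon> \<delta> u v"
proof
  assume "(u, v) \<in> Eset b \<gamma> \<psi> q x \<epsilon> \<delta>"
  then show "x \<in> tangency_set b \<gamma> \<psi> \<epsilon> \<delta> u v"
    using assms concat_seq_in_cylinder unfolding Eset_def tangency_set_def by fastforce
next
  assume "x \<in> tangency_set b \<gamma> \<psi> \<epsilon> \<delta> u v"
  then obtain i j where "i \<in> cylinder b u" "j \<in> cylinder b v" "tangent b \<gamma> \<psi> \<epsilon> \<delta> x i j"
    unfolding tangency_set_def by blast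
  moreover have "length u = q" "length v = q"
    using assms by (auto simp: words_def)
  ultimately show "(u, v) \<in> Eset b \<gamma> \<psi> q x \<epsilon> \<delta>"
    unfolding Eset_def using assms cylinder_concat_seq by auto metis
qed

lemma compact_tangent_triples:
  assumes "\<And>y. (\<psi> has_real_derivative D y) (at y)" "continuous_on UNIV D" "0 \<le> \<gamma>" "\<gamma> < 1"
  shows "compact {p \<in> {0..1} \<times> cylinder b u \<times> cylinder b v.
                    tangent b \<gamma> \<psi> \<epsilon> \<delta> (fst p) (fst (snd p)) (snd (snd p))}"
proof -
  define C where "C = {0..1::real} \<times> cylinder b u \<times> cylinder b v"
  define dS where "dS p = \<bar>S b \<gamma> \<psi> (fst p) (fst (snd p)) - S b \<gamma> \<psi> (fst p) (snd (snd p))\<bar>" for p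
  define dS' where "dS' p = \<bar>S' b \<gamma> \<psi> (fst p) (fst (snd p)) - S' b \<gamma> \<psi> (fst p) (snd (snd p))\<bar>" for p
  have pair1: "continuous_on C (\<lambda>p. (fst p, fst (snd p)))"
    and pair2: "continuous_on C (\<lambda>p. (fst p, snd (snd p)))"
    by (intro continuous_on_Pair continuous_on_fst continuous_on_snd continuous_on_id)+
  have img1: "(\<lambda>p. (fst p, fst (snd p))) ` C \<subseteq> {0..1} \<times> seqs b"
    and img2: "(\<lambda>p. (fst p, snd (snd p))) ` C \<subseteq> {0..1} \<times> seqs b"
    by (auto simp: C_def cylinder_def)
  note S = continuous_on_compose2[OF continuous_on_S[OF assms(1,3,4)]]
  note S' = continuous_on_compose2[OF continuous_on_S'[OF assms]]
  have "continuous_on C (\<lambda>p. S b \<gamma> \<psi> (fst p) (fst (snd p)))"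
    "continuous_on C (\<lambda>p. S b \<gamma> \<psi> (fst p) (snd (snd p)))"
    "continuous_on C (\<lambda>p. S' b \<gamma> \<psi> (fst p) (fst (snd p)))"
    "continuous_on C (\<lambda>p. S' b \<gamma> \<psi> (fst p) (snd (snd p)))"
    using S[OF pair1 img1] S[OF pair2 img2] S'[OF pair1 img1] S'[OF pair2 img2] by simp_all
  then have "continuous_on C dS" "continuous_on C dS'"
    unfolding dS_def dS'_def by (auto intro!: continuous_on_rabs continuous_on_diff)
  then have "closedin (top_of_set C) ((C \<inter> dS -` {..\<epsilon>}) \<inter> (C \<inter> dS' -` {..\<delta>}))"
    by (intro closedin_Int continuous_closedin_preimage closed_atMost)
  also have "(C \<inter> dS -` {..\<epsilon>}) \<inter> (C \<inter> dS' -` {..\<delta>}) =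
      {p \<in> C. tangent b \<gamma> \<psi> \<epsilon> \<delta> (fst p) (fst (snd p)) (snd (snd p))}"
    unfolding dS_def dS'_def tangent_def by auto
  finally have "closedin (top_of_set C) {p \<in> C. tangent b \<gamma> \<psi> \<epsilon> \<delta> (fst p) (fst (snd p)) (snd (snd p))}" .
  moreover have "compact C"
    unfolding C_def by (intro compact_Times compact_cylinder compact_Icc)
  ultimately show ?thesis
    unfolding C_def by (rule closedin_compact[rotated])
qed

lemma closed_tangency_set:
  assumes "\<And>y. (\<psi> has_real_derivative D y) (at y)" "continuous_on UNIV D" "0 \<le> \<gamma>" "\<gamma> < 1"
  shows "closed (tangency_set b \<gamma> \<psi> \<epsilon> \<delta> u v)"
proof -
  let ?T = "{p \<in> {0..1} \<times> cylinder b u \<times> cylinder b v.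
              tangent b \<gamma> \<psi> \<epsilon> \<delta> (fst p) (fst (snd p)) (snd (snd p))}"
  have "tangency_set b \<gamma> \<psi> \<epsilon> \<delta> u v = fst ` ?T"
    unfolding tangency_set_def by (auto simp: image_iff intro!: exI) blast
  also have "compact \<dots>"
    by (intro compact_continuous_image continuous_on_fst continuous_on_id
        compact_tangent_triples[OF assms])
  finally show ?thesis
    by (rule compact_imp_closed)
qed

lemma sets_borel_Eset:
  assumes "\<And>y. (\<psi> has_real_derivative D y) (at y)" "continuous_on UNIV D" "0 \<le> \<gamma>" "\<gamma> < 1"
  shows "{x \<in> {0..<1}. (u, v) \<in> Eset b \<gamma> \<psi> q x \<epsilon> \<delta>} \<in> sets borel"
proof (cases "u \<in> words b q \<and> v \<in> words b q")
  case True
  then have "{x \<in> {0..<1}. (u, v) \<in> Eset b \<gamma> \<psi> q x \<epsilon> \<delta>} = {0..<1} \<inter> tangency_set b \<gamma> \<psi> \<epsilon> \<delta> u v"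
    using Eset_iff_tangency_set by blast
  then show ?thesis
    using closed_tangency_set[OF assms] by (simp add: borel_closed sets.Int)
next
  case False
  then have "{x \<in> {0..<1}. (u, v) \<in> Eset b \<gamma> \<psi> q x \<epsilon> \<delta>} = {}"
    by (auto simp: Eset_def)
  then show ?thesis
    by (simp only: sets.empty_sets)
qed

lemma Eset_sym: "(u, v) \<in> Eset b \<gamma> \<psi> q x \<epsilon> \<delta> \<Longrightarrow> (v, u) \<in> Eset b \<gamma> \<psi> q x \<epsilon> \<delta>"
  unfolding Eset_def tangent_def by (auto simp: abs_minus_commute)

lemma finite_words: "finite (words b q)"
proof -
  have "words b q = {xs. set xs \<subseteq> {..<b} \<and> length xs = q}"
    by (auto simp: words_def)
  then show ?thesis
    by (simp add: finite_lists_length_eq)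
qed

lemma words_nonempty: "0 < b \<Longrightarrow> words b q \<noteq> {}"
  by (auto simp: words_def intro!: exI[of _ "replicate q 0"])

definition neighbours ::
  "nat \<Rightarrow> real \<Rightarrow> (real \<Rightarrow> real) \<Rightarrow> nat \<Rightarrow> real \<Rightarrow> real \<Rightarrow> real \<Rightarrow> nat list \<Rightarrow> nat list set" where
  "neighbours b \<gamma> \<psi> q x \<epsilon> \<delta> u = {v. (u, v) \<in> Eset b \<gamma> \<psi> q x \<epsilon> \<delta>}"

lemma neighbours_subset_words: "neighbours b \<gamma> \<psi> q x \<epsilon> \<delta> u \<subseteq> words b q"
  by (auto simp: neighbours_def Eset_def)

lemma self_mem_neighbours:
  assumes "0 < b" "u \<in> words b q" "0 \<le> \<epsilon>" "0 \<le> \<delta>"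
  shows "u \<in> neighbours b \<gamma> \<psi> q x \<epsilon> \<delta> u"
  using assms unfolding neighbours_def Eset_def tangent_def seqs_def
  by (auto intro!: exI[of _ "\<lambda>_. 0"])

lemma card_neighbours_le_e_num:
  "u \<in> words b q \<Longrightarrow> card (neighbours b \<gamma> \<psi> q x \<epsilon> \<delta> u) \<le> e_num b \<gamma> \<psi> q x \<epsilon> \<delta>"
  unfolding e_num_def neighbours_def by (intro Max_ge) (auto simp: finite_words)

definition ratio_test ::
  "nat \<Rightarrow> real \<Rightarrow> (real \<Rightarrow> real) \<Rightarrow> nat \<Rightarrow> real \<Rightarrow> real \<Rightarrow> (real \<Rightarrow> real) \<Rightarrow>
    real \<Rightarrow> nat list \<Rightarrow> nat list \<Rightarrow> real" where
  "ratio_test b \<gamma> \<psi> q \<epsilon> \<delta> \<omega> x u v =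
     (if x \<in> {0..<1} \<and> (u, v) \<in> Eset b \<gamma> \<psi> q x \<epsilon> \<delta> then \<omega> (xw b x u) / \<omega> (xw b x v) else 0)"

lemma borel_measurable_restrict_lebesgue:
  "f \<in> borel_measurable borel \<Longrightarrow> f \<in> borel_measurable (restrict_space lebesgue A)"
  by (intro measurable_restrict_space1 measurable_completion) simp

lemma borel_measurable_xw [measurable]: "(\<lambda>x. xw b x u) \<in> borel_measurable borel"
  unfolding xw_def by measurable

lemma borel_measurable_ratio_test:
  assumes "\<omega> \<in> borel_measurable borel"
    and "{x \<in> {0..<1}. (u, v) \<in> Eset b \<gamma> \<psi> q x \<epsilon> \<delta>} \<in> sets borel"
  shows "(\<lambda>x. ratio_test b \<gamma> \<psi> q \<epsilon> \<delta> \<omega> x u v) \<in> borel_measurable borel"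
proof -
  have "(\<lambda>x. ratio_test b \<gamma> \<psi> q \<epsilon> \<delta> \<omega> x u v) =
      (\<lambda>x. if x \<in> {x \<in> {0..<1}. (u, v) \<in> Eset b \<gamma> \<psi> q x \<epsilon> \<delta>}
           then \<omega> (xw b x u) / \<omega> (xw b x v) else 0)"
    by (simp add: ratio_test_def fun_eq_iff)
  also have "\<dots> \<in> borel_measurable borel"
    using assms by (intro measurable_If_set) (auto intro: measurable_compose[OF _ assms(1)])
  finally show ?thesis .
qed

lemma admissible_ratio_test:
  assumes "\<And>y. 0 < \<omega> y" "\<omega> \<in> borel_measurable borel" "0 < \<epsilon>" "0 < \<delta>"
    and "\<And>u v. {x \<in> {0..<1}. (u, v) \<in> Eset b \<gamma> \<psi> q x \<epsilon> \<delta>} \<in> sets borel"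
  shows "admissible_test b \<gamma> \<psi> q (ratio_test b \<gamma> \<psi> q \<epsilon> \<delta> \<omega>)"
proof -
  let ?V = "ratio_test b \<gamma> \<psi> q \<epsilon> \<delta> \<omega>"
  have "\<forall>x\<in>{0..<1}. \<forall>(u, v)\<in>Eset b \<gamma> \<psi> q x \<epsilon> \<delta>. 1 \<le> ?V x u v * ?V x v u"
    using assms(1)[THEN less_imp_neq] Eset_sym by (auto simp: ratio_test_def)
  moreover have "\<forall>x\<in>{0..<1}. \<forall>u v. 0 \<le> ?V x u v"
    using assms(1) by (simp add: ratio_test_def less_imp_le)
  moreover have "\<forall>u v. (\<lambda>x. ?V x u v) \<in> borel_measurable (restrict_space lebesgue {0..<1})"
    using assms by (auto intro!: borel_measurable_restrict_lebesgue borel_measurable_ratio_test)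
  ultimately show ?thesis
    unfolding admissible_test_def using assms(3,4) by blast
qed

lemma Sigma_Vw_ratio_test:
  assumes "\<And>y. 0 < \<omega> y" "x \<in> {0..<1}"
  shows "Sigma_Vw b q (ratio_test b \<gamma> \<psi> q \<epsilon> \<delta> \<omega>) \<omega> x =
    Max ((\<lambda>u. \<omega> x * (\<Sum>v\<in>neighbours b \<gamma> \<psi> q x \<epsilon> \<delta> u. 1 / \<omega> (xw b x v))) ` words b q)"
  unfolding Sigma_Vw_def
proof (intro arg_cong[where f = Max] image_cong refl)
  fix u
  let ?N = "neighbours b \<gamma> \<psi> q x \<epsilon> \<delta> u"
  have "(\<Sum>v\<in>words b q. ratio_test b \<gamma> \<psi> q \<epsilon> \<delta> \<omega> x u v) = (\<Sum>v\<in>?N. \<omega> (xw b x u) / \<omega> (xw b x v))"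
    using assms(2) neighbours_subset_words
    by (intro sum.mono_neutral_cong_right finite_words) (auto simp: ratio_test_def neighbours_def)
  also have "\<dots> = \<omega> (xw b x u) * (\<Sum>v\<in>?N. 1 / \<omega> (xw b x v))"
    by (simp add: sum_distrib_left)
  finally show "\<omega> x / \<omega> (xw b x u) * (\<Sum>v\<in>words b q. ratio_test b \<gamma> \<psi> q \<epsilon> \<delta> \<omega> x u v) =
      \<omega> x * (\<Sum>v\<in>?N. 1 / \<omega> (xw b x v))"
    using assms(1)[of "xw b x u"] by simp
qed

lemma borel_measurable_Sigma_Vw_ratio_test:
  assumes "\<omega> \<in> borel_measurable borel"
    and "\<And>u v. {x \<in> {0..<1}. (u, v) \<in> Eset b \<gamma> \<psi> q x \<epsilon> \<delta>} \<in> sets borel"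
  shows "Sigma_Vw b q (ratio_test b \<gamma> \<psi> q \<epsilon> \<delta> \<omega>) \<omega> \<in> borel_measurable borel"
  unfolding Sigma_Vw_def
  by (intro borel_measurable_Max finite_words borel_measurable_times borel_measurable_divide
      borel_measurable_sum assms(1) measurable_compose[OF borel_measurable_xw assms(1)]
      borel_measurable_ratio_test[OF assms])

lemma sigma_q_le:
  assumes "weight_fun \<omega>" "admissible_test b \<gamma> \<psi> q V"
    and "Sigma_Vw b q V \<omega> \<in> borel_measurable borel"
    and "\<And>x. x \<in> {0..<1} \<Longrightarrow> Sigma_Vw b q V \<omega> x \<le> c"
  shows "sigma_q b \<gamma> \<psi> q \<le> ereal c"
proof -
  have "esssup (restrict_space lebesgue {0..<1}) (\<lambda>x. ereal (Sigma_Vw b q V \<omega> x)) \<le> ereal c"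
    using assms(3,4) by (intro esssup_I AE_I2)
      (auto simp: space_restrict_space intro: borel_measurable_restrict_lebesgue)
  then show ?thesis
    unfolding sigma_q_def using assms(1,2) by (blast intro: Inf_lower2)
qed

definition golden_ratio :: real where
  "golden_ratio = (sqrt 5 + 1) / 2"

lemma golden_ratio_gt_1: "1 < golden_ratio"
proof -
  have "1 < sqrt 5"
    by (simp add: real_less_rsqrt)
  then show ?thesis
    by (simp add: golden_ratio_def)
qed

lemma golden_ratio_inverse: "1 / golden_ratio = golden_ratio - 1"
proof -
  have "golden_ratio * golden_ratio = golden_ratio + 1"
    by (simp add: golden_ratio_def algebra_simps)
  then show ?thesis
    using golden_ratio_gt_1 by (simp add: field_simps)
qed

definition golden_weight :: "real set \<Rightarrow> real \<Rightarrow> real" where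
  "golden_weight K y = (if y \<in> K then 1 else 1 / golden_ratio)"

lemma golden_weight_pos: "0 < golden_weight K y"
  using golden_ratio_gt_1 by (simp add: golden_weight_def)

lemma borel_measurable_golden_weight:
  assumes [measurable]: "K \<in> sets borel"
  shows "golden_weight K \<in> borel_measurable borel"
  unfolding golden_weight_def by measurable

lemma weight_fun_golden_weight:
  assumes "K \<in> sets borel"
  shows "weight_fun (golden_weight K)"
proof -
  have "1 / golden_ratio \<le> golden_ratio"
    using golden_ratio_gt_1 by (simp add: divide_le_eq) (metis less_imp_le one_le_power power2_eq_square)
  then show ?thesis
    unfolding weight_fun_def using golden_ratio_gt_1 assms
    by (auto simp: golden_weight_pos golden_weight_def
        intro!: exI[of _ golden_ratio] borel_measurable_restrict_lebesgue borel_measurable_golden_weight)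
qed

lemma golden_weight_row_le:
  fixes g :: "'a \<Rightarrow> real"
  assumes "finite N" "u \<in> N" "card N \<le> 2" "x \<in> K \<Longrightarrow> card N \<le> 1"
    and "\<And>v. x \<notin> K \<Longrightarrow> v \<in> N \<Longrightarrow> v \<noteq> u \<Longrightarrow> g u \<in> K \<or> g v \<in> K"
  shows "golden_weight K x * (\<Sum>v\<in>N. 1 / golden_weight K (g v)) \<le> golden_ratio"
proof (cases "N = {u}")
  case True
  have "golden_weight K x * (1 / golden_weight K (g u)) \<le> 1 * golden_ratio"
    using golden_ratio_gt_1 golden_weight_pos[of K "g u"]
    by (intro mult_mono) (auto simp: golden_weight_def)
  then show ?thesis
    using True by simp
next
  case False
  then obtain v where v: "v \<in> N" "v \<noteq> u"
    using assms(2) by blast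
  then have N: "N = {u, v}"
    using card_seteq[of N "{u, v}"] assms(1-3) by auto
  then have "x \<notin> K"
    using assms(4) v(2) by auto
  then have "g u \<in> K \<or> g v \<in> K"
    using assms(5) v by blast
  then have "1 / golden_weight K (g u) + 1 / golden_weight K (g v) \<le> 1 + golden_ratio"
    using golden_ratio_gt_1 by (auto simp: golden_weight_def)
  then have "1 / golden_ratio * (1 / golden_weight K (g u) + 1 / golden_weight K (g v))
      \<le> 1 / golden_ratio * (1 + golden_ratio)"
    using golden_ratio_gt_1 by (intro mult_left_mono) auto
  also have "\<dots> = golden_ratio"
    using golden_ratio_gt_1 golden_ratio_inverse by (simp add: field_simps)
  finally show ?thesis
    using N v(2) \<open>x \<notin> K\<close> by (simp add: golden_weight_def)
qed

lemma golden_weight_neighbours_le: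
  assumes "0 < b" "0 < \<epsilon>" "0 < \<delta>" "u \<in> words b q"
    and "x \<in> K \<Longrightarrow> e_num b \<gamma> \<psi> q x \<epsilon> \<delta> \<le> 1" "e_num b \<gamma> \<psi> q x \<epsilon> \<delta> \<le> 2"
    and "\<And>v. x \<notin> K \<Longrightarrow> (u, v) \<in> Eset b \<gamma> \<psi> q x \<epsilon> \<delta> \<Longrightarrow> u \<noteq> v \<Longrightarrow>
           xw b x u \<in> K \<or> xw b x v \<in> K"
  shows "golden_weight K x * (\<Sum>v\<in>neighbours b \<gamma> \<psi> q x \<epsilon> \<delta> u. 1 / golden_weight K (xw b x v))
           \<le> golden_ratio"
proof (rule golden_weight_row_le)
  show "finite (neighbours b \<gamma> \<psi> q x \<epsilon> \<delta> u)"
    using finite_subset[OF neighbours_subset_words finite_words] .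
  show "u \<in> neighbours b \<gamma> \<psi> q x \<epsilon> \<delta> u"
    using self_mem_neighbours assms(1-4) by simp
  show "card (neighbours b \<gamma> \<psi> q x \<epsilon> \<delta> u) \<le> 2"
    "x \<in> K \<Longrightarrow> card (neighbours b \<gamma> \<psi> q x \<epsilon> \<delta> u) \<le> 1"
    using card_neighbours_le_e_num[OF assms(4), of \<gamma> \<psi> x \<epsilon> \<delta>] assms(5,6) by simp_all
qed (use assms(7) in \<open>auto simp: neighbours_def\<close>)

theorem lemma2p11:
  fixes b :: nat and \<gamma> :: real and \<psi> :: "real \<Rightarrow> real"
    and q :: nat and \<epsilon> \<delta> :: real and K :: "real set"
  assumes b: "2 \<le> b"
    and \<gamma>: "1 / real b < \<gamma>" "\<gamma> < 1"
    and \<psi>_per: "\<And>x. \<psi> (x + 1) = \<psi> x"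
    and \<psi>_C1: "\<psi> C1_differentiable_on UNIV"
    and q: "1 \<le> q"
    and \<epsilon>: "0 < \<epsilon>" and \<delta>: "0 < \<delta>"
    and K_borel: "K \<in> sets borel" and K_sub: "K \<subseteq> {0..<1}"
    and i_K: "\<And>x. x \<in> K \<Longrightarrow> e_num b \<gamma> \<psi> q x \<epsilon> \<delta> \<le> 1"
    and i_notK: "\<And>x. x \<in> {0..<1} - K \<Longrightarrow> e_num b \<gamma> \<psi> q x \<epsilon> \<delta> \<le> 2"
    and ii: "\<And>x u v. x \<in> {0..<1} - K \<Longrightarrow> (u, v) \<in> Eset b \<gamma> \<psi> q x \<epsilon> \<delta> \<Longrightarrow> u \<noteq> v \<Longrightarrow>
               xw b x u \<in> K \<or> xw b x v \<in> K"
  shows "sigma_q b \<gamma> \<psi> q \<le> ereal ((sqrt 5 + 1) / 2)"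
proof -
  obtain D where D: "\<And>x. (\<psi> has_real_derivative D x) (at x)" "continuous_on UNIV D"
    using \<psi>_C1 by (auto simp: C1_differentiable_on_def has_real_derivative_iff_has_vector_derivative)
  have "0 \<le> 1 / real b"
    by simp
  with \<gamma>(1) have "0 \<le> \<gamma>"
    by linarith
  note E_borel = sets_borel_Eset[OF D this \<gamma>(2)]
  let ?\<omega> = "golden_weight K"
  have Sigma_le: "Sigma_Vw b q (ratio_test b \<gamma> \<psi> q \<epsilon> \<delta> ?\<omega>) ?\<omega> x \<le> golden_ratio"
    if x: "x \<in> {0..<1}" for x
  proof -
    have e_num_le: "e_num b \<gamma> \<psi> q x \<epsilon> \<delta> \<le> 2"
      using i_K[of x] i_notK[of x] x by fastforce
    have "?\<omega> x * (\<Sum>v\<in>neighbours b \<gamma> \<psi> q x \<epsilon> \<delta> u. 1 / ?\<omega> (xw b x v)) \<le> golden_ratio"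
      if "u \<in> words b q" for u
      by (rule golden_weight_neighbours_le[OF _ \<epsilon> \<delta> that i_K e_num_le]) (use b ii x in auto)
    then show ?thesis
      unfolding Sigma_Vw_ratio_test[OF golden_weight_pos x]
      using words_nonempty b by (auto intro!: Max.boundedI simp: finite_words)
  qed
  have "admissible_test b \<gamma> \<psi> q (ratio_test b \<gamma> \<psi> q \<epsilon> \<delta> ?\<omega>)"
    by (intro admissible_ratio_test golden_weight_pos borel_measurable_golden_weight K_borel \<epsilon> \<delta> E_borel)
  moreover have "Sigma_Vw b q (ratio_test b \<gamma> \<psi> q \<epsilon> \<delta> ?\<omega>) ?\<omega> \<in> borel_measurable borel"
    by (intro borel_measurable_Sigma_Vw_ratio_test borel_measurable_golden_weight K_borel E_borel)
  ultimately show ?thesis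
    unfolding golden_ratio_def[symmetric]
    using sigma_q_le[OF weight_fun_golden_weight[OF K_borel] _ _ Sigma_le] by blast
qed

end
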